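(* Let $R$ be a locally bounded $K$-category, $X\in\mathrm{Mod}(R)$, $M\in\mathrm{mod}(R)$, and $C$ a full subcategory of $R$ with $\mathrm{supp}(M)\subseteq C$. Let $D$ be the full subcategory of $R$ whose objects are those $x$ with $R(c,x)\neq 0$ for some object $c$ of $C$. If $h:\mathrm{res}_D(X)\to \mathrm{res}_D(M)$ is a homomorphism of $D$-modules, then the family $h^{[0]}=(h^{[0]}_a:X(a)\to M(a))_{a\in \mathrm{ob}(R)}$ defined by $h^{[0]}_a=h_a$ if $a\in\mathrm{supp}(M)$ and $h^{[0]}_a=0$ otherwise is an $R$-module homomorphism $X\to M$.
   Context: A $K$-category ($K$ an algebraically closed field) is locally bounded if distinct objects are non-isomorphic, endomorphism algebras of objects are local, and for each object $x$, $\sum_y\dim_K R(x,y)<\infty$ and $\sum_y\dim_K R(y,x)<\infty$. An $R$-module is a $K$-linear functor $R^{op}\to\mathrm{Mod}(K)$; $\mathrm{Mod}(R)$ is the category of $R$-modules $X$ with $\dim_K X(x)<\infty$ for all $x$, and $\mathrm{mod}(R)$ those with $\sum_x\dim_K M(x)<\infty$. $\mathrm{supp}(M)$ is the full subcategory of objects $x$ with $M(x)\neq 0$. For a full subcategory $D$, $\mathrm{res}_D$ denotes restriction of modules to $D$. *)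

theory Defs
  imports Main "HOL-Computational_Algebra.Polynomial"
begin

definition alg_closed_field :: "'k::field itself \<Rightarrow> bool" where
  "alg_closed_field _ \<longleftrightarrow> (\<forall>p :: 'k poly. degree p > 0 \<longrightarrow> (\<exists>x. poly p x = 0))"

definition fin_dim :: "('k::field \<Rightarrow> 'v::ab_group_add \<Rightarrow> 'v) \<Rightarrow> 'v set \<Rightarrow> bool" where
  "fin_dim s S \<longleftrightarrow> (\<exists>B. finite B \<and> B \<subseteq> S \<and> module.span s B = S)"

(* A K-linear category: objects Ob, morphism spaces Hom x y (morphisms x -> y) are
   subspaces of a K-vector space of morphisms; cmp x y z g f = g o f for f : x -> y, g : y -> z. *)
definition Kcat ::
  "('k::field \<Rightarrow> 'm::ab_group_add \<Rightarrow> 'm) \<Rightarrow> 'o set \<Rightarrow> ('o \<Rightarrow> 'o \<Rightarrow> 'm set)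
   \<Rightarrow> ('o \<Rightarrow> 'o \<Rightarrow> 'o \<Rightarrow> 'm \<Rightarrow> 'm \<Rightarrow> 'm) \<Rightarrow> ('o \<Rightarrow> 'm) \<Rightarrow> bool" where
  "Kcat sR Ob Hom cmp idn \<longleftrightarrow>
     vector_space sR \<and>
     (\<forall>x\<in>Ob. \<forall>y\<in>Ob. module.subspace sR (Hom x y)) \<and>
     (\<forall>x\<in>Ob. \<forall>y\<in>Ob. \<forall>z\<in>Ob. \<forall>f\<in>Hom x y. \<forall>g\<in>Hom y z. cmp x y z g f \<in> Hom x z) \<and>
     (\<forall>w\<in>Ob. \<forall>x\<in>Ob. \<forall>y\<in>Ob. \<forall>z\<in>Ob. \<forall>f\<in>Hom w x. \<forall>g\<in>Hom x y. \<forall>k\<in>Hom y z.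
        cmp w y z k (cmp w x y g f) = cmp w x z (cmp x y z k g) f) \<and>
     (\<forall>x\<in>Ob. idn x \<in> Hom x x) \<and>
     (\<forall>x\<in>Ob. \<forall>y\<in>Ob. \<forall>f\<in>Hom x y. cmp x y y (idn y) f = f \<and> cmp x x y f (idn x) = f) \<and>
     (\<forall>x\<in>Ob. \<forall>y\<in>Ob. \<forall>z\<in>Ob. \<forall>f\<in>Hom x y. \<forall>f'\<in>Hom x y. \<forall>g\<in>Hom y z. \<forall>g'\<in>Hom y z. \<forall>c.
        cmp x y z (g + g') f = cmp x y z g f + cmp x y z g' f \<and>
        cmp x y z g (f + f') = cmp x y z g f + cmp x y z g f' \<and>
        cmp x y z (sR c g) f = sR c (cmp x y z g f) \<and>
        cmp x y z g (sR c f) = sR c (cmp x y z g f))"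

definition is_iso_obj ::
  "('o \<Rightarrow> 'o \<Rightarrow> 'm set) \<Rightarrow> ('o \<Rightarrow> 'o \<Rightarrow> 'o \<Rightarrow> 'm \<Rightarrow> 'm \<Rightarrow> 'm) \<Rightarrow> ('o \<Rightarrow> 'm) \<Rightarrow> 'o \<Rightarrow> 'o \<Rightarrow> bool" where
  "is_iso_obj Hom cmp idn x y \<longleftrightarrow>
     (\<exists>f\<in>Hom x y. \<exists>g\<in>Hom y x. cmp x y x g f = idn x \<and> cmp y x y f g = idn y)"

definition is_unit_end ::
  "('o \<Rightarrow> 'o \<Rightarrow> 'm set) \<Rightarrow> ('o \<Rightarrow> 'o \<Rightarrow> 'o \<Rightarrow> 'm \<Rightarrow> 'm \<Rightarrow> 'm) \<Rightarrow> ('o \<Rightarrow> 'm) \<Rightarrow> 'o \<Rightarrow> 'm \<Rightarrow> bool" where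
  "is_unit_end Hom cmp idn x f \<longleftrightarrow>
     (\<exists>g\<in>Hom x x. cmp x x x g f = idn x \<and> cmp x x x f g = idn x)"

definition local_end ::
  "('o \<Rightarrow> 'o \<Rightarrow> 'm::ab_group_add set) \<Rightarrow> ('o \<Rightarrow> 'o \<Rightarrow> 'o \<Rightarrow> 'm \<Rightarrow> 'm \<Rightarrow> 'm) \<Rightarrow> ('o \<Rightarrow> 'm) \<Rightarrow> 'o \<Rightarrow> bool" where
  "local_end Hom cmp idn x \<longleftrightarrow> idn x \<noteq> 0 \<and>
     (\<forall>f\<in>Hom x x. \<forall>g\<in>Hom x x. \<not> is_unit_end Hom cmp idn x f \<longrightarrow> \<not> is_unit_end Hom cmp idn x g
        \<longrightarrow> \<not> is_unit_end Hom cmp idn x (f + g))"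

definition locally_bounded ::
  "('k::field \<Rightarrow> 'm::ab_group_add \<Rightarrow> 'm) \<Rightarrow> 'o set \<Rightarrow> ('o \<Rightarrow> 'o \<Rightarrow> 'm set)
   \<Rightarrow> ('o \<Rightarrow> 'o \<Rightarrow> 'o \<Rightarrow> 'm \<Rightarrow> 'm \<Rightarrow> 'm) \<Rightarrow> ('o \<Rightarrow> 'm) \<Rightarrow> bool" where
  "locally_bounded sR Ob Hom cmp idn \<longleftrightarrow>
     Kcat sR Ob Hom cmp idn \<and>
     (\<forall>x\<in>Ob. \<forall>y\<in>Ob. is_iso_obj Hom cmp idn x y \<longrightarrow> x = y) \<and>
     (\<forall>x\<in>Ob. local_end Hom cmp idn x) \<and>
     (\<forall>x\<in>Ob. \<forall>y\<in>Ob. fin_dim sR (Hom x y)) \<and>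
     (\<forall>x\<in>Ob. finite {y\<in>Ob. Hom x y \<noteq> {0}} \<and> finite {y\<in>Ob. Hom y x \<noteq> {0}})"

(* A module over the full subcategory with object set D (contravariant K-linear functor):
   Xsp a = X(a), and for f \<in> Hom b a (f : b -> a), Xact a b f = X(f) : X(a) -> X(b). *)
definition Kmod_on ::
  "('k::field \<Rightarrow> 'm::ab_group_add \<Rightarrow> 'm) \<Rightarrow> 'o set \<Rightarrow> ('o \<Rightarrow> 'o \<Rightarrow> 'm set)
   \<Rightarrow> ('o \<Rightarrow> 'o \<Rightarrow> 'o \<Rightarrow> 'm \<Rightarrow> 'm \<Rightarrow> 'm) \<Rightarrow> ('o \<Rightarrow> 'm)
   \<Rightarrow> ('k \<Rightarrow> 'v::ab_group_add \<Rightarrow> 'v) \<Rightarrow> ('o \<Rightarrow> 'v set) \<Rightarrow> ('o \<Rightarrow> 'o \<Rightarrow> 'm \<Rightarrow> 'v \<Rightarrow> 'v) \<Rightarrow> bool" where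
  "Kmod_on sR D Hom cmp idn sV Xsp Xact \<longleftrightarrow>
     vector_space sV \<and>
     (\<forall>a\<in>D. module.subspace sV (Xsp a)) \<and>
     (\<forall>a\<in>D. \<forall>b\<in>D. \<forall>f\<in>Hom b a. \<forall>v\<in>Xsp a. Xact a b f v \<in> Xsp b) \<and>
     (\<forall>a\<in>D. \<forall>b\<in>D. \<forall>f\<in>Hom b a. \<forall>v\<in>Xsp a. \<forall>w\<in>Xsp a. \<forall>c.
        Xact a b f (v + w) = Xact a b f v + Xact a b f w \<and>
        Xact a b f (sV c v) = sV c (Xact a b f v)) \<and>
     (\<forall>a\<in>D. \<forall>b\<in>D. \<forall>f\<in>Hom b a. \<forall>f'\<in>Hom b a. \<forall>v\<in>Xsp a. \<forall>c.
        Xact a b (f + f') v = Xact a b f v + Xact a b f' v \<and>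
        Xact a b (sR c f) v = sV c (Xact a b f v)) \<and>
     (\<forall>a\<in>D. \<forall>v\<in>Xsp a. Xact a a (idn a) v = v) \<and>
     (\<forall>a\<in>D. \<forall>b\<in>D. \<forall>c\<in>D. \<forall>f\<in>Hom c b. \<forall>g\<in>Hom b a. \<forall>v\<in>Xsp a.
        Xact a c (cmp c b a g f) v = Xact b c f (Xact a b g v))"

definition in_Mod where
  "in_Mod sR Ob Hom cmp idn sV Xsp Xact \<longleftrightarrow>
     Kmod_on sR Ob Hom cmp idn sV Xsp Xact \<and> (\<forall>a\<in>Ob. fin_dim sV (Xsp a))"

definition in_mod where
  "in_mod sR Ob Hom cmp idn sV Xsp Xact \<longleftrightarrow>
     in_Mod sR Ob Hom cmp idn sV Xsp Xact \<and> finite {a\<in>Ob. Xsp a \<noteq> {0}}"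

definition supp :: "'o set \<Rightarrow> ('o \<Rightarrow> 'v::zero set) \<Rightarrow> 'o set" where
  "supp Ob Msp = {a\<in>Ob. Msp a \<noteq> {0}}"

(* homomorphism of modules over the full subcategory with object set D
   (for D a set of objects: a homomorphism res_D X \<rightarrow> res_D M) *)
definition mod_hom_on ::
  "'o set \<Rightarrow> ('o \<Rightarrow> 'o \<Rightarrow> 'm set)
   \<Rightarrow> ('k \<Rightarrow> 'v::ab_group_add \<Rightarrow> 'v) \<Rightarrow> ('o \<Rightarrow> 'v set) \<Rightarrow> ('o \<Rightarrow> 'o \<Rightarrow> 'm \<Rightarrow> 'v \<Rightarrow> 'v)
   \<Rightarrow> ('k \<Rightarrow> 'w::ab_group_add \<Rightarrow> 'w) \<Rightarrow> ('o \<Rightarrow> 'w set) \<Rightarrow> ('o \<Rightarrow> 'o \<Rightarrow> 'm \<Rightarrow> 'w \<Rightarrow> 'w)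
   \<Rightarrow> ('o \<Rightarrow> 'v \<Rightarrow> 'w) \<Rightarrow> bool" where
  "mod_hom_on D Hom sV Xsp Xact sW Msp Mact h \<longleftrightarrow>
     (\<forall>a\<in>D. \<forall>x\<in>Xsp a. h a x \<in> Msp a) \<and>
     (\<forall>a\<in>D. \<forall>x\<in>Xsp a. \<forall>y\<in>Xsp a. \<forall>c. h a (x + y) = h a x + h a y \<and> h a (sV c x) = sW c (h a x)) \<and>
     (\<forall>a\<in>D. \<forall>b\<in>D. \<forall>f\<in>Hom b a. \<forall>x\<in>Xsp a. h b (Xact a b f x) = Mact a b f (h a x))"

end

theory Submission
  imports Defs
begin

(* Extending h by zero outside supp M can only break naturality at a morphism f : b -> a
   with b in supp M and a outside it, where the right-hand side M(f)(0) vanishes.  If a lies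
   in D, naturality of h applies and h_a already lands in M(a) = 0; otherwise R(b, a) = 0
   because b lies in C, so f = 0 and X(f) = 0.  Supp M lies in D because idn b is a nonzero
   element of R(b, b). *)

definition zero_ext :: "'o set \<Rightarrow> ('o \<Rightarrow> 'v \<Rightarrow> 'w::zero) \<Rightarrow> 'o \<Rightarrow> 'v \<Rightarrow> 'w" where
  "zero_ext S h = (\<lambda>a x. if a \<in> S then h a x else 0)"

lemma Kmod_on_zero_mem:
  assumes "Kmod_on sR D Hom cmp idn sV Xsp Xact" and "a \<in> D"
  shows "0 \<in> Xsp a"
proof -
  have "module sV" and "module.subspace sV (Xsp a)"
    using assms by (simp_all add: Kmod_on_def module_iff_vector_space)
  then show ?thesis by (rule module.subspace_0)
qed

lemma Kmod_on_scale_zero: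
  assumes "Kmod_on sR D Hom cmp idn sV Xsp Xact"
  shows "sV c 0 = 0"
proof -
  have "module sV" using assms by (simp add: Kmod_on_def module_iff_vector_space)
  then show ?thesis by (rule module.scale_zero_right)
qed

lemma Kmod_on_act_zero:
  assumes X: "Kmod_on sR D Hom cmp idn sV Xsp Xact"
    and "a \<in> D" "b \<in> D" "f \<in> Hom b a"
  shows "Xact a b f 0 = 0"
proof -
  have "0 \<in> Xsp a" using X \<open>a \<in> D\<close> by (rule Kmod_on_zero_mem)
  with assms have "Xact a b f (0 + 0) = Xact a b f 0 + Xact a b f 0"
    unfolding Kmod_on_def by blast
  then show ?thesis by simp
qed

lemma Kmod_on_act_zero_morphism:
  assumes "Kmod_on sR D Hom cmp idn sV Xsp Xact"
    and "a \<in> D" "b \<in> D" "0 \<in> Hom b a" "v \<in> Xsp a"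
  shows "Xact a b 0 v = 0"
proof -
  from assms have "Xact a b (0 + 0) v = Xact a b 0 v + Xact a b 0 v"
    unfolding Kmod_on_def by blast
  then show ?thesis by simp
qed

lemma mod_hom_on_zero:
  assumes "mod_hom_on D Hom sV Xsp Xact sW Msp Mact h" and "a \<in> D" "0 \<in> Xsp a"
  shows "h a 0 = 0"
proof -
  from assms have "h a (0 + 0) = h a 0 + h a 0" unfolding mod_hom_on_def by blast
  then show ?thesis by simp
qed

lemma locally_bounded_Hom_self_nontrivial:
  assumes "locally_bounded sR Ob Hom cmp idn" and "a \<in> Ob"
  shows "Hom a a \<noteq> {0}"
proof -
  have "idn a \<in> Hom a a" and "idn a \<noteq> 0"
    using assms by (simp_all add: locally_bounded_def Kcat_def local_end_def)
  then show ?thesis by blast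
qed

lemma zero_ext_natural:
  assumes X: "Kmod_on sR Ob Hom cmp idn sV Xsp Xact"
    and M: "Kmod_on sR Ob Hom cmp idn sW Msp Mact"
    and h: "mod_hom_on D Hom sV Xsp Xact sW Msp Mact h"
    and supp_D: "supp Ob Msp \<subseteq> D"
    and D_closed: "\<And>a b. b \<in> supp Ob Msp \<Longrightarrow> a \<in> Ob \<Longrightarrow> Hom b a \<noteq> {0} \<Longrightarrow> a \<in> D"
    and a: "a \<in> Ob" and b: "b \<in> Ob" and f: "f \<in> Hom b a" and x: "x \<in> Xsp a"
  shows "zero_ext (supp Ob Msp) h b (Xact a b f x) = Mact a b f (zero_ext (supp Ob Msp) h a x)"
proof (cases "b \<in> supp Ob Msp")
  case False
  then have "Msp b = {0}" using b by (simp add: supp_def)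
  moreover have "zero_ext (supp Ob Msp) h a x \<in> Msp a"
    using a x supp_D h Kmod_on_zero_mem[OF M a]
    by (auto simp: zero_ext_def mod_hom_on_def)
  ultimately show ?thesis
    using M a b f False by (auto simp: zero_ext_def Kmod_on_def)
next
  case b_supp: True
  then have bD: "b \<in> D" using supp_D by blast
  show ?thesis
  proof (cases "a \<in> supp Ob Msp")
    case True
    then have "a \<in> D" using supp_D by blast
    with bD h f x have "h b (Xact a b f x) = Mact a b f (h a x)"
      unfolding mod_hom_on_def by blast
    then show ?thesis using b_supp True by (simp add: zero_ext_def)
  next
    case a_nsupp: False
    then have Ma: "Msp a = {0}" using a by (simp add: supp_def)
    have "h b (Xact a b f x) = 0"
    proof (cases "a \<in> D")
      case True
      then have "h a x = 0" using h x Ma by (auto simp: mod_hom_on_def)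
      then show ?thesis
        using h True bD f x Kmod_on_act_zero[OF M a b f] by (simp add: mod_hom_on_def)
    next
      case False
      then have "Hom b a = {0}" using D_closed[OF b_supp a] by blast
      then have "f = 0" using f by blast
      then have "Xact a b f x = 0"
        using Kmod_on_act_zero_morphism[OF X a b _ x] f by simp
      moreover have "0 \<in> Xsp b" using X b by (rule Kmod_on_zero_mem)
      ultimately show ?thesis using mod_hom_on_zero[OF h bD] by simp
    qed
    then show ?thesis
      using b_supp a_nsupp Kmod_on_act_zero[OF M a b f] by (simp add: zero_ext_def)
  qed
qed

lemma mod_hom_on_zero_ext:
  assumes X: "Kmod_on sR Ob Hom cmp idn sV Xsp Xact"
    and M: "Kmod_on sR Ob Hom cmp idn sW Msp Mact"
    and h: "mod_hom_on D Hom sV Xsp Xact sW Msp Mact h"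
    and supp_D: "supp Ob Msp \<subseteq> D"
    and D_closed: "\<And>a b. b \<in> supp Ob Msp \<Longrightarrow> a \<in> Ob \<Longrightarrow> Hom b a \<noteq> {0} \<Longrightarrow> a \<in> D"
  shows "mod_hom_on Ob Hom sV Xsp Xact sW Msp Mact (zero_ext (supp Ob Msp) h)"
  unfolding mod_hom_on_def
proof (intro conjI ballI allI)
  fix a x assume "a \<in> Ob" "x \<in> Xsp a"
  then show "zero_ext (supp Ob Msp) h a x \<in> Msp a"
    using supp_D h Kmod_on_zero_mem[OF M] by (auto simp: zero_ext_def mod_hom_on_def)
next
  fix a x y c assume "a \<in> Ob" "x \<in> Xsp a" "y \<in> Xsp a"
  then show "zero_ext (supp Ob Msp) h a (x + y) =
      zero_ext (supp Ob Msp) h a x + zero_ext (supp Ob Msp) h a y"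
    and "zero_ext (supp Ob Msp) h a (sV c x) = sW c (zero_ext (supp Ob Msp) h a x)"
    using supp_D h Kmod_on_scale_zero[OF M] by (auto simp: zero_ext_def mod_hom_on_def)
next
  fix a b f x assume "a \<in> Ob" "b \<in> Ob" "f \<in> Hom b a" "x \<in> Xsp a"
  from X M h supp_D D_closed this show "zero_ext (supp Ob Msp) h b (Xact a b f x) = Mact a b f (zero_ext (supp Ob Msp) h a x)"
    by (rule zero_ext_natural)
qed

theorem lemma3p5:
  fixes sR :: "'k::field \<Rightarrow> 'm::ab_group_add \<Rightarrow> 'm"
    and Ob :: "'o set" and Hom :: "'o \<Rightarrow> 'o \<Rightarrow> 'm set"
    and cmp :: "'o \<Rightarrow> 'o \<Rightarrow> 'o \<Rightarrow> 'm \<Rightarrow> 'm \<Rightarrow> 'm" and idn :: "'o \<Rightarrow> 'm"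
    and sV :: "'k \<Rightarrow> 'v::ab_group_add \<Rightarrow> 'v" and Xsp :: "'o \<Rightarrow> 'v set"
    and Xact :: "'o \<Rightarrow> 'o \<Rightarrow> 'm \<Rightarrow> 'v \<Rightarrow> 'v"
    and sW :: "'k \<Rightarrow> 'w::ab_group_add \<Rightarrow> 'w" and Msp :: "'o \<Rightarrow> 'w set"
    and Mact :: "'o \<Rightarrow> 'o \<Rightarrow> 'm \<Rightarrow> 'w \<Rightarrow> 'w"
    and C D :: "'o set" and h :: "'o \<Rightarrow> 'v \<Rightarrow> 'w"
  assumes "alg_closed_field TYPE('k)"
    and "locally_bounded sR Ob Hom cmp idn"
    and "in_Mod sR Ob Hom cmp idn sV Xsp Xact"
    and "in_mod sR Ob Hom cmp idn sW Msp Mact"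
    and "C \<subseteq> Ob"
    and "supp Ob Msp \<subseteq> C"
    and "D = {x\<in>Ob. \<exists>c\<in>C. Hom c x \<noteq> {0}}"
    and "mod_hom_on D Hom sV Xsp Xact sW Msp Mact h"
  shows "mod_hom_on Ob Hom sV Xsp Xact sW Msp Mact
           (\<lambda>a x. if a \<in> supp Ob Msp then h a x else 0)"
proof -
  have X: "Kmod_on sR Ob Hom cmp idn sV Xsp Xact" using assms(3) by (simp add: in_Mod_def)
  have M: "Kmod_on sR Ob Hom cmp idn sW Msp Mact"
    using assms(4) by (simp add: in_mod_def in_Mod_def)
  have "supp Ob Msp \<subseteq> D"
  proof
    fix a assume "a \<in> supp Ob Msp"
    then have "a \<in> C" "a \<in> Ob" using assms(6) by (auto simp: supp_def)
    with locally_bounded_Hom_self_nontrivial[OF assms(2)] show "a \<in> D"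
      using assms(7) by blast
  qed
  moreover have "a \<in> D" if "b \<in> supp Ob Msp" "a \<in> Ob" "Hom b a \<noteq> {0}" for a b
    using that assms(6,7) by blast
  ultimately show ?thesis
    using mod_hom_on_zero_ext[OF X M assms(8)] by (simp add: zero_ext_def)
qed

end
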